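(* Let $(\Omega,\mathcal F,\mu)$ be a measure space with $\mu(\Omega)=\infty$, $p\in[1,\infty)$ and $k\ge1$. Then $\mathscr G_{p,k}$ is proximinal in $L^p(\Omega,\mathcal F,\mu)$. Moreover, let $f\in L^p$ and let $g=\sum_{i=1}^q b_i\mathbf 1_{A_i}$ be a minimizer with $q\le k$, $b_1<\dots<b_q$ real, $\{A_i\}_{1\le i\le q}$ a measurable partition of $\Omega$ with $\mu(A_i)>0$ for all $i$, and let $s$ be the unique index with $b_s=0$. Put $r_1=-\infty$, $r_{q+1}=+\infty$, $r_i=\frac{b_{i-1}+b_i}{2}$ for $2\le i\le q$ (so $r_s<0<r_{s+1}$), and $C_i=f^{-1}([r_i,r_{i+1}))$. Then $\mu(C_i)<\infty$ for $i\ne s$, for each $i\ne s$ with $\mu(C_i)>0$ the number $b_i$ is a $p$-th mean of $f$ on $C_i$, and $\tilde g=\sum_{i\ne s}\mathcal M_p(f,C_i)\mathbf 1_{C_i}+0\cdot\mathbf 1_{C_s}$ is a minimizer in $\mathscr G_{p,q}$. If $q$ is the smallest number of distinct values among all minimizers, then $\mu(C_i)>0$ for all $i$.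
   Context: $\mathscr G_{p,k}$ is the set of functions $\sum_{i=1}^l a_i\mathbf 1_{A_i}\in L^p$ with $l\le k$, $\{A_i\}$ a measurable partition of $\Omega$, $a_i\in\mathbb R$ (membership in $L^p$ forces $a_i=0$ when $\mu(A_i)=\infty$); $\mathscr D_{p,k}(f)=\inf\{\|f-h\|_p:\ h\in\mathscr G_{p,k}\}$; a minimizer is any $g\in\mathscr G_{p,k}$ with $\|f-g\|_p=\mathscr D_{p,k}(f)$. $p$-th mean: for measurable $A$ with $0<\mu(A)<\infty$, a $p$-th mean of $f$ on $A$ is any minimizer over $a\in\mathbb R$ of $\int_A|f-a|^p\,d\mu$; for $p>1$ it is unique and denoted $\mathcal M_p(f,A)$; for $p=1$ the minimizers form a bounded closed interval $[a^*,b^*]$ and $\mathcal M_1(f,A)=(a^*+b^* )/2$; if $\mu(A)=0$, $\mathcal M_p(f,A)=0$. *)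

theory Defs
  imports "HOL-Analysis.Analysis"
begin

definition memLp :: "'a measure \<Rightarrow> real \<Rightarrow> ('a \<Rightarrow> real) \<Rightarrow> bool" where
  "memLp M p f \<longleftrightarrow> f \<in> borel_measurable M \<and> integrable M (\<lambda>x. \<bar>f x\<bar> powr p)"

definition Lp_norm :: "'a measure \<Rightarrow> real \<Rightarrow> ('a \<Rightarrow> real) \<Rightarrow> real" where
  "Lp_norm M p f = (\<integral>x. \<bar>f x\<bar> powr p \<partial>M) powr (1 / p)"

definition Gpk :: "'a measure \<Rightarrow> real \<Rightarrow> nat \<Rightarrow> ('a \<Rightarrow> real) set" where
  "Gpk M p k = {h. memLp M p h \<and>
     (\<exists>l a A. l \<le> k \<and> (\<forall>i\<in>{1..l}. A i \<in> sets M) \<and> disjoint_family_on A {1..l}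
        \<and> (\<Union>i\<in>{1..l}. A i) = space M
        \<and> h = (\<lambda>x. \<Sum>i\<in>{1..l}. (a i :: real) * indicator (A i) x))}"

definition Dpk :: "'a measure \<Rightarrow> real \<Rightarrow> nat \<Rightarrow> ('a \<Rightarrow> real) \<Rightarrow> real" where
  "Dpk M p k f = (INF h\<in>Gpk M p k. Lp_norm M p (\<lambda>x. f x - h x))"

definition minimizer :: "'a measure \<Rightarrow> real \<Rightarrow> nat \<Rightarrow> ('a \<Rightarrow> real) \<Rightarrow> ('a \<Rightarrow> real) \<Rightarrow> bool" where
  "minimizer M p k f g \<longleftrightarrow> g \<in> Gpk M p k \<and> Lp_norm M p (\<lambda>x. f x - g x) = Dpk M p k f"

definition proximinal :: "'a measure \<Rightarrow> real \<Rightarrow> nat \<Rightarrow> bool" where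
  "proximinal M p k \<longleftrightarrow> (\<forall>f. memLp M p f \<longrightarrow> (\<exists>g. minimizer M p k f g))"

definition is_pth_mean :: "'a measure \<Rightarrow> real \<Rightarrow> ('a \<Rightarrow> real) \<Rightarrow> 'a set \<Rightarrow> real \<Rightarrow> bool" where
  "is_pth_mean M p f A a \<longleftrightarrow>
     (\<forall>c. (\<integral>x\<in>A. \<bar>f x - a\<bar> powr p \<partial>M) \<le> (\<integral>x\<in>A. \<bar>f x - c\<bar> powr p \<partial>M))"

definition Mp :: "'a measure \<Rightarrow> real \<Rightarrow> ('a \<Rightarrow> real) \<Rightarrow> 'a set \<Rightarrow> real" where
  "Mp M p f A =
     (if emeasure M A = 0 then 0
      else if p > 1 then (THE a. is_pth_mean M p f A a)
      else (Inf {a. is_pth_mean M p f A a} + Sup {a. is_pth_mean M p f A a}) / 2)"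

definition thr :: "nat \<Rightarrow> (nat \<Rightarrow> real) \<Rightarrow> nat \<Rightarrow> ereal" where
  "thr q b i = (if i \<le> 1 then -\<infinity> else if i \<ge> q + 1 then \<infinity>
                else ereal ((b (i - 1) + b i) / 2))"

definition Cset :: "'a measure \<Rightarrow> nat \<Rightarrow> (nat \<Rightarrow> real) \<Rightarrow> ('a \<Rightarrow> real) \<Rightarrow> nat \<Rightarrow> 'a set" where
  "Cset M q b f i = {x \<in> space M. thr q b i \<le> ereal (f x) \<and> ereal (f x) < thr q b (Suc i)}"

end

theory Submission
  imports Defs
begin

text \<open>
  Since \<open>\<mu>(\<Omega>) = \<infinity>\<close>, every step function in \<open>L\<^sup>p\<close> vanishes on a piece of infinite
  measure. It therefore suffices to minimize, over vectors \<open>c\<close> of \<open>k - 1\<close> extended reals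
  (infinite entries unused), the error \<open>\<Phi>(c) = \<integral> min (|f|\<^sup>p, min\<^sub>j |f - c\<^sub>j|\<^sup>p)\<close> of the
  best step function with values in \<open>{0} \<union> {c\<^sub>j}\<close>, which sends every point to a nearest
  value. By dominated convergence \<open>\<Phi>\<close> is continuous on the compact space of extended real
  vectors, so it attains its minimum.

  For a minimizer with values \<open>b\<^sub>1 < \<dots> < b\<^sub>q\<close>, moving every point to the cell \<open>C\<^sub>i\<close> of its
  nearest value \<open>b\<^sub>i\<close> cannot increase the error, so the step function with value \<open>b\<^sub>i\<close> on
  \<open>C\<^sub>i\<close> is again a minimizer. Its error splits into a sum over the cells, and optimality
  forces each \<open>b\<^sub>i\<close>, \<open>i \<noteq> s\<close>, to be a \<open>p\<close>-th mean on \<open>C\<^sub>i\<close>; replacing it by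
  \<open>M\<^sub>p(f, C\<^sub>i)\<close> keeps the error. A null cell could be merged into \<open>C\<^sub>s\<close>, which would
  lower the number of values.
\<close>

lemma abs_add_powr_le:
  fixes x y p :: real assumes "0 < p"
  shows "\<bar>x + y\<bar> powr p \<le> 2 powr p * (\<bar>x\<bar> powr p + \<bar>y\<bar> powr p)"
proof -
  have "\<bar>x + y\<bar> powr p \<le> (2 * max \<bar>x\<bar> \<bar>y\<bar>) powr p"
    by (intro powr_mono2) (use assms in auto)
  also have "\<dots> = 2 powr p * max \<bar>x\<bar> \<bar>y\<bar> powr p" by (simp add: powr_mult)
  also have "max \<bar>x\<bar> \<bar>y\<bar> powr p \<le> \<bar>x\<bar> powr p + \<bar>y\<bar> powr p" by (auto simp: max_def)
  finally show ?thesis by simp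
qed

lemma powr_midpoint_less:
  fixes a b p :: real assumes p: "1 < p" and a: "0 \<le> a" and ab: "a < b"
  shows "((a + b) / 2) powr p < (a powr p + b powr p) / 2"
proof -
  define m where "m = (a + b) / 2"
  have m: "a < m" "m < b" "b - m = m - a" using ab by (simp_all add: m_def field_simps)
  have cont: "continuous_on {u..v} (\<lambda>x. x powr p)" if "0 \<le> u" for u v :: real
    using that p by (intro continuous_on_powr' continuous_intros) auto
  have diff: "(\<lambda>x. x powr p) differentiable (at x)" if "0 < x" for x :: real
    using has_real_derivative_powr[OF that] real_differentiable_def by blast
  have deriv_eq: "l = p * z powr (p - 1)" if "0 < z" "DERIV (\<lambda>x. x powr p) z :> l" for l z
    using DERIV_unique[OF that(2) has_real_derivative_powr[OF that(1)]] .
  have dif1: "(\<lambda>x. x powr p) differentiable (at x)" if "a < x" for x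
    using diff[of x] a that by simp
  have dif2: "(\<lambda>x. x powr p) differentiable (at x)" if "m < x" for x
    using diff[of x] a m that by simp
  obtain l1 z1 where z1: "a < z1" "z1 < m" "DERIV (\<lambda>x. x powr p) z1 :> l1"
    "m powr p - a powr p = (m - a) * l1"
    using MVT[OF m(1) cont[OF a] dif1] by blast
  obtain l2 z2 where z2: "m < z2" "z2 < b" "DERIV (\<lambda>x. x powr p) z2 :> l2"
    "b powr p - m powr p = (b - m) * l2"
    using MVT[OF m(2) cont[of m b] dif2] a m(1) by auto
  have "z1 powr (p - 1) < z2 powr (p - 1)"
    using z1 z2 a p by (intro powr_less_mono2) auto
  then have "l1 < l2"
    using deriv_eq[OF _ z1(3)] deriv_eq[OF _ z2(3)] z1 z2 a p by auto
  then have "m powr p - a powr p < b powr p - m powr p"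
    using z1(4) z2(4) m by (simp add: mult_strict_left_mono)
  then show ?thesis by (simp add: m_def)
qed

lemma abs_powr_midpoint_less:
  fixes u v p :: real assumes p: "1 < p" and uv: "u \<noteq> v"
  shows "\<bar>(u + v) / 2\<bar> powr p < (\<bar>u\<bar> powr p + \<bar>v\<bar> powr p) / 2"
proof (cases "\<bar>u\<bar> = \<bar>v\<bar>")
  case True
  then have "v = - u" "u \<noteq> 0" using uv by (auto simp: abs_if split: if_splits)
  then show ?thesis by simp
next
  case False
  have "\<bar>(u + v) / 2\<bar> powr p \<le> ((\<bar>u\<bar> + \<bar>v\<bar>) / 2) powr p"
    using p by (intro powr_mono2) auto
  also have "\<dots> < (\<bar>u\<bar> powr p + \<bar>v\<bar> powr p) / 2"
  proof (cases "\<bar>u\<bar> < \<bar>v\<bar>")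
    case True
    then show ?thesis using powr_midpoint_less[OF p, of "\<bar>u\<bar>" "\<bar>v\<bar>"] by simp
  next
    case False
    then have "\<bar>v\<bar> < \<bar>u\<bar>" using \<open>\<bar>u\<bar> \<noteq> \<bar>v\<bar>\<close> by simp
    then show ?thesis using powr_midpoint_less[OF p, of "\<bar>v\<bar>" "\<bar>u\<bar>"] by (simp add: add.commute)
  qed
  finally show ?thesis .
qed

lemma powr_le_powr_iff:
  fixes x y r :: real assumes "0 \<le> x" "0 \<le> y" "0 < r"
  shows "x powr r \<le> y powr r \<longleftrightarrow> x \<le> y"
proof
  assume "x powr r \<le> y powr r"
  then show "x \<le> y" using assms powr_less_mono2[of r y x] by (meson not_le)
qed (use assms in \<open>simp add: powr_mono2\<close>)

section \<open>Step functions in \<open>L\<^sup>p\<close>\<close>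

lemma integrable_abs_powr_dominated:
  fixes f g h :: "'a \<Rightarrow> real"
  assumes p: "0 < p" and f: "integrable M (\<lambda>x. \<bar>f x\<bar> powr p)" and g: "integrable M (\<lambda>x. \<bar>g x\<bar> powr p)"
    and h: "h \<in> borel_measurable M" and bound: "\<And>x. x \<in> space M \<Longrightarrow> \<bar>h x\<bar> \<le> \<bar>f x\<bar> + \<bar>g x\<bar>"
  shows "integrable M (\<lambda>x. \<bar>h x\<bar> powr p)"
proof (rule Bochner_Integration.integrable_bound)
  show "integrable M (\<lambda>x. 2 powr p * (\<bar>f x\<bar> powr p + \<bar>g x\<bar> powr p))"
    by (intro integrable_mult_right Bochner_Integration.integrable_add f g)
  show "(\<lambda>x. \<bar>h x\<bar> powr p) \<in> borel_measurable M" using h by measurable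
  show "AE x in M. norm (\<bar>h x\<bar> powr p) \<le> norm (2 powr p * (\<bar>f x\<bar> powr p + \<bar>g x\<bar> powr p))"
  proof (rule AE_I2)
    fix x assume "x \<in> space M"
    then have "\<bar>h x\<bar> powr p \<le> \<bar>\<bar>f x\<bar> + \<bar>g x\<bar>\<bar> powr p"
      using bound p by (intro powr_mono2) auto
    also have "\<dots> \<le> 2 powr p * (\<bar>f x\<bar> powr p + \<bar>g x\<bar> powr p)"
      using abs_add_powr_le[OF p, of "\<bar>f x\<bar>" "\<bar>g x\<bar>"] by simp
    finally show "norm (\<bar>h x\<bar> powr p) \<le> norm (2 powr p * (\<bar>f x\<bar> powr p + \<bar>g x\<bar> powr p))"
      by simp
  qed
qed

lemma memLp_integrable_diff_powr:
  assumes "0 < p" "memLp M p f" "memLp M p g"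
  shows "integrable M (\<lambda>x. \<bar>f x - g x\<bar> powr p)"
proof (rule integrable_abs_powr_dominated[of p M f "\<lambda>x. - g x"])
  show "integrable M (\<lambda>x. \<bar>f x\<bar> powr p)" "integrable M (\<lambda>x. \<bar>- g x\<bar> powr p)"
    "(\<lambda>x. f x - g x) \<in> borel_measurable M"
    using assms by (auto simp: memLp_def)
qed (use assms in auto)

lemma integrable_indicator_abs_diff_powr:
  assumes p: "0 < p" and f: "memLp M p f" and S: "S \<in> sets M" and fin: "c = 0 \<or> emeasure M S < \<infinity>"
  shows "integrable M (\<lambda>x. indicator S x * \<bar>f x - c\<bar> powr p)"
proof -
  have [measurable]: "f \<in> borel_measurable M" "S \<in> sets M" using f S by (auto simp: memLp_def)
  have "(\<lambda>x. \<bar>c * indicator S x\<bar> powr p) = (\<lambda>x. \<bar>c\<bar> powr p * indicator S x)"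
    using p by (auto simp: indicator_def)
  then have "integrable M (\<lambda>x. \<bar>c * indicator S x\<bar> powr p)"
    using fin S by (cases "c = 0") auto
  then have "integrable M (\<lambda>x. \<bar>indicator S x * (f x - c)\<bar> powr p)"
  proof (rule integrable_abs_powr_dominated[OF p, of M f, rotated])
    show "integrable M (\<lambda>x. \<bar>f x\<bar> powr p)" using f by (simp add: memLp_def)
    show "(\<lambda>x. indicator S x * (f x - c)) \<in> borel_measurable M" by measurable
    show "\<bar>indicator S x * (f x - c)\<bar> \<le> \<bar>f x\<bar> + \<bar>c * indicator S x\<bar>" for x
      by (simp add: indicator_def abs_triangle_ineq4)
  qed
  moreover have "\<bar>indicator S x * (f x - c)\<bar> powr p = indicator S x * \<bar>f x - c\<bar> powr p" for x
    by (simp add: indicator_def)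
  ultimately show ?thesis by simp
qed

lemma memLp_emeasure_const_finite:
  assumes "memLp M p h" "0 < p" "S \<in> sets M" "\<And>x. x \<in> S \<Longrightarrow> h x = c" "c \<noteq> 0"
  shows "emeasure M S < \<infinity>"
proof -
  have int: "integrable M (\<lambda>x. \<bar>h x\<bar> powr p)" using assms(1) by (simp add: memLp_def)
  have "ennreal (\<bar>c\<bar> powr p) * emeasure M S = (\<integral>\<^sup>+x. ennreal (\<bar>c\<bar> powr p) * indicator S x \<partial>M)"
    using nn_integral_cmult_indicator[OF assms(3)] by simp
  also have "\<dots> \<le> (\<integral>\<^sup>+x. ennreal (\<bar>h x\<bar> powr p) \<partial>M)"
    using assms(4) by (intro nn_integral_mono) (auto simp: indicator_def)
  also have "\<dots> < \<infinity>" using integrableD(2)[OF int] by (simp add: top.not_eq_extremum)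
  finally show ?thesis using assms(5) by (auto simp: ennreal_mult_less_top)
qed

lemma infinite_emeasure_piece:
  assumes "emeasure M (space M) = \<infinity>" "finite I" "\<And>i. i \<in> I \<Longrightarrow> A i \<in> sets M"
    "(\<Union>i\<in>I. A i) = space M"
  obtains i where "i \<in> I" "emeasure M (A i) = \<infinity>"
proof -
  have "emeasure M (space M) \<le> (\<Sum>i\<in>I. emeasure M (A i))"
    using emeasure_subadditive_finite[of I A M] assms by auto
  then have "(\<Sum>i\<in>I. emeasure M (A i)) = \<infinity>" using assms(1) by (simp add: top_unique)
  then have "\<exists>i\<in>I. \<not> emeasure M (A i) < \<infinity>"
    using ennreal_sum_less_top[OF assms(2), of "\<lambda>i. emeasure M (A i)"] by auto
  then obtain i where "i \<in> I" "\<not> emeasure M (A i) < \<infinity>" by blast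
  then show ?thesis using that[of i] by (simp add: less_top[symmetric])
qed

abbreviation step_fun :: "'i set \<Rightarrow> ('i \<Rightarrow> real) \<Rightarrow> ('i \<Rightarrow> 'a set) \<Rightarrow> 'a \<Rightarrow> real" where
  "step_fun I a A \<equiv> \<lambda>x. \<Sum>i\<in>I. a i * indicator (A i) x"

lemma step_fun_eq:
  assumes "finite I" "disjoint_family_on A I" "i \<in> I" "x \<in> A i"
  shows "step_fun I a A x = a i"
proof -
  have "x \<notin> A j" if "j \<in> I - {i}" for j
    using assms(2-4) that unfolding disjoint_family_on_def by blast
  then have "(\<Sum>j\<in>I - {i}. a j * indicator (A j) x) = 0"
    by (intro sum.neutral) simp
  then show ?thesis using sum.remove[OF assms(1,3), of "\<lambda>j. a j * indicator (A j) x"] assms(4) by simp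
qed

lemma borel_measurable_step_fun:
  assumes "\<And>i. i \<in> I \<Longrightarrow> A i \<in> sets M"
  shows "step_fun I a A \<in> borel_measurable M"
proof (rule borel_measurable_sum)
  fix i assume "i \<in> I"
  then have [measurable]: "A i \<in> sets M" using assms by simp
  show "(\<lambda>x. a i * indicator (A i) x) \<in> borel_measurable M" by measurable
qed

lemma GpkI:
  assumes "memLp M p (step_fun {1..l} a A)" "l \<le> k" "\<And>i. i \<in> {1..l} \<Longrightarrow> A i \<in> sets M"
    "disjoint_family_on A {1..l}" "(\<Union>i\<in>{1..l}. A i) = space M"
  shows "step_fun {1..l} a A \<in> Gpk M p k"
  using assms unfolding Gpk_def by blast

lemma GpkE:
  assumes "h \<in> Gpk M p k"
  obtains l A a where "memLp M p h" "l \<le> k" "\<And>i. i \<in> {1..l} \<Longrightarrow> A i \<in> sets M"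
    "disjoint_family_on A {1..l}" "(\<Union>i\<in>{1..l}. A i) = space M" "h = step_fun {1..l} a A"
  using assms unfolding Gpk_def by blast

lemma Gpk_mono: "k \<le> k' \<Longrightarrow> Gpk M p k \<subseteq> Gpk M p k'"
  unfolding Gpk_def by (blast intro: order_trans)

definition Lp_err :: "'a measure \<Rightarrow> real \<Rightarrow> ('a \<Rightarrow> real) \<Rightarrow> ('a \<Rightarrow> real) \<Rightarrow> real" where
  "Lp_err M p f h = (\<integral>x. \<bar>f x - h x\<bar> powr p \<partial>M)"

lemma minimizer_iff_Lp_err:
  assumes p: "0 < p"
  shows "minimizer M p k f g \<longleftrightarrow> g \<in> Gpk M p k \<and> (\<forall>h\<in>Gpk M p k. Lp_err M p f g \<le> Lp_err M p f h)"
proof -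
  have norm: "Lp_norm M p (\<lambda>x. f x - h x) = Lp_err M p f h powr (1 / p)" for h
    by (simp add: Lp_norm_def Lp_err_def)
  have norm_le_iff: "Lp_norm M p (\<lambda>x. f x - g x) \<le> Lp_norm M p (\<lambda>x. f x - h x) \<longleftrightarrow>
      Lp_err M p f g \<le> Lp_err M p f h" for h
    unfolding norm using p by (intro powr_le_powr_iff) (auto simp: Lp_err_def)
  have bdd: "bdd_below ((\<lambda>h. Lp_norm M p (\<lambda>x. f x - h x)) ` Gpk M p k)"
    by (rule bdd_belowI2[of _ 0]) (simp add: norm)
  show ?thesis
  proof
    assume m: "minimizer M p k f g"
    have "Lp_err M p f g \<le> Lp_err M p f h" if "h \<in> Gpk M p k" for h
      using m cINF_lower[OF bdd that] norm_le_iff[of h] by (simp add: minimizer_def Dpk_def)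
    then show "g \<in> Gpk M p k \<and> (\<forall>h\<in>Gpk M p k. Lp_err M p f g \<le> Lp_err M p f h)"
      using m by (simp add: minimizer_def)
  next
    assume g: "g \<in> Gpk M p k \<and> (\<forall>h\<in>Gpk M p k. Lp_err M p f g \<le> Lp_err M p f h)"
    have "Dpk M p k f = Lp_norm M p (\<lambda>x. f x - g x)"
      unfolding Dpk_def
    proof (rule cInf_eq_minimum)
      fix y assume "y \<in> (\<lambda>h. Lp_norm M p (\<lambda>x. f x - h x)) ` Gpk M p k"
      then obtain h where "h \<in> Gpk M p k" "y = Lp_norm M p (\<lambda>x. f x - h x)" by blast
      then show "Lp_norm M p (\<lambda>x. f x - g x) \<le> y" using g norm_le_iff[of h] by simp
    qed (use g in blast)
    then show "minimizer M p k f g" using g by (simp add: minimizer_def)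
  qed
qed

section \<open>Existence of best approximations\<close>

(* real_of_ereal sends infinite values to 0, so an infinite candidate value is simply absent. *)
definition two_point_err :: "real \<Rightarrow> ereal \<Rightarrow> real \<Rightarrow> real" where
  "two_point_err p e y = min (\<bar>y\<bar> powr p) (\<bar>y - real_of_ereal e\<bar> powr p)"

primrec nearest_err :: "real \<Rightarrow> nat \<Rightarrow> (nat \<Rightarrow> ereal) \<Rightarrow> real \<Rightarrow> real" where
  "nearest_err p 0 v y = \<bar>y\<bar> powr p"
| "nearest_err p (Suc m) v y = min (nearest_err p m v y) (two_point_err p (v m) y)"

lemma two_point_err_far:
  fixes y r p :: real
  assumes "0 < p" "2 * \<bar>y\<bar> + 1 < \<bar>r\<bar>"
  shows "two_point_err p (ereal r) y = \<bar>y\<bar> powr p"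
  using assms powr_mono2[of p "\<bar>y\<bar>" "\<bar>y - r\<bar>"] by (simp add: two_point_err_def)

lemma two_point_err_infinite:
  "two_point_err p \<infinity> y = \<bar>y\<bar> powr p" "two_point_err p (- \<infinity>) y = \<bar>y\<bar> powr p"
  by (simp_all add: two_point_err_def)

lemma tendsto_two_point_err:
  assumes p: "0 < p" and X: "X \<longlonglongrightarrow> L"
  shows "(\<lambda>n. two_point_err p (X n) y) \<longlonglongrightarrow> two_point_err p L y"
proof (cases "\<bar>L\<bar> = \<infinity>")
  case False
  then obtain r where r: "L = ereal r" by (cases L) auto
  then have "(\<lambda>n. real_of_ereal (X n)) \<longlonglongrightarrow> r" using X by simp
  then show ?thesis using r p unfolding two_point_err_def by (auto intro!: tendsto_intros)
next
  case True
  have "eventually (\<lambda>n. ereal (2 * \<bar>y\<bar> + 1) < \<bar>X n\<bar>) sequentially"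
    using tendsto_abs_ereal[OF X] True by (intro order_tendstoD(1)) auto
  then have "eventually (\<lambda>n. two_point_err p (X n) y = two_point_err p L y) sequentially"
  proof eventually_elim
    case (elim n)
    then show ?case using True two_point_err_far[OF p, of y]
      by (cases "X n"; cases L) (auto simp: two_point_err_infinite)
  qed
  then show ?thesis by (rule tendsto_eventually)
qed

lemma tendsto_nearest_err:
  assumes "0 < p" "\<And>j. j < m \<Longrightarrow> (\<lambda>n. X n j) \<longlonglongrightarrow> L j"
  shows "(\<lambda>n. nearest_err p m (X n) y) \<longlonglongrightarrow> nearest_err p m L y"
  using assms(2) by (induction m) (auto intro!: tendsto_min tendsto_two_point_err[OF assms(1)])

lemma nearest_err_nonneg: "0 \<le> nearest_err p m v y"
  by (induction m) (auto simp: two_point_err_def)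

lemma nearest_err_le_abs_powr: "nearest_err p m v y \<le> \<bar>y\<bar> powr p"
  by (induction m) auto

lemma nearest_err_le: "j < m \<Longrightarrow> nearest_err p m v y \<le> \<bar>y - real_of_ereal (v j)\<bar> powr p"
  by (induction m) (auto simp: less_Suc_eq two_point_err_def)

lemma nearest_err_ge:
  assumes "0 < p" "\<bar>y - c\<bar> \<le> \<bar>y\<bar>" "\<And>j. j < m \<Longrightarrow> \<bar>y - c\<bar> \<le> \<bar>y - real_of_ereal (v j)\<bar>"
  shows "\<bar>y - c\<bar> powr p \<le> nearest_err p m v y"
  using assms by (induction m) (auto simp: two_point_err_def intro: powr_mono2)

lemma borel_measurable_nearest_err[measurable]:
  "f \<in> borel_measurable M \<Longrightarrow> (\<lambda>x. nearest_err p m v (f x)) \<in> borel_measurable M"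
  by (induction m) (simp_all add: two_point_err_def)

lemma integrable_nearest_err:
  assumes "memLp M p f"
  shows "integrable M (\<lambda>x. nearest_err p m v (f x))"
proof (rule Bochner_Integration.integrable_bound)
  show "integrable M (\<lambda>x. \<bar>f x\<bar> powr p)" using assms by (simp add: memLp_def)
  show "(\<lambda>x. nearest_err p m v (f x)) \<in> borel_measurable M"
    using assms by (intro borel_measurable_nearest_err) (simp add: memLp_def)
  show "AE x in M. norm (nearest_err p m v (f x)) \<le> norm (\<bar>f x\<bar> powr p)"
    using nearest_err_nonneg nearest_err_le_abs_powr by (intro AE_I2) simp
qed

lemma tendsto_integral_nearest_err:
  assumes p: "0 < p" and f: "memLp M p f" and X: "\<And>j. j < m \<Longrightarrow> (\<lambda>n. X n j) \<longlonglongrightarrow> L j"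
  shows "(\<lambda>n. \<integral>x. nearest_err p m (X n) (f x) \<partial>M) \<longlonglongrightarrow> (\<integral>x. nearest_err p m L (f x) \<partial>M)"
proof (rule integral_dominated_convergence[where w="\<lambda>x. \<bar>f x\<bar> powr p"])
  have [measurable]: "f \<in> borel_measurable M" using f by (simp add: memLp_def)
  show "(\<lambda>x. nearest_err p m L (f x)) \<in> borel_measurable M"
    "\<And>n. (\<lambda>x. nearest_err p m (X n) (f x)) \<in> borel_measurable M" by measurable
  show "integrable M (\<lambda>x. \<bar>f x\<bar> powr p)" using f by (simp add: memLp_def)
  show "AE x in M. (\<lambda>n. nearest_err p m (X n) (f x)) \<longlonglongrightarrow> nearest_err p m L (f x)"
    using tendsto_nearest_err[OF p X] by (intro AE_I2) auto
  show "\<And>n. AE x in M. norm (nearest_err p m (X n) (f x)) \<le> \<bar>f x\<bar> powr p"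
    using nearest_err_nonneg nearest_err_le_abs_powr by (intro AE_I2) simp
qed

lemma compact_complete_linorder_coordinates:
  fixes X :: "nat \<Rightarrow> nat \<Rightarrow> 'a::{complete_linorder,linorder_topology}"
  shows "\<exists>r L. strict_mono r \<and> (\<forall>j<m. (\<lambda>n. X (r n) j) \<longlonglongrightarrow> L j)"
proof (induction m)
  case 0
  have "strict_mono (id :: nat \<Rightarrow> nat)" by (simp add: strict_mono_def)
  then show ?case by blast
next
  case (Suc m)
  then obtain r L where r: "strict_mono r" "\<forall>j<m. (\<lambda>n. X (r n) j) \<longlonglongrightarrow> L j" by blast
  obtain r' l where r': "strict_mono r'" "((\<lambda>n. X (r n) m) \<circ> r') \<longlonglongrightarrow> l"
    using compact_complete_linorder by blast
  have "(\<lambda>n. X ((r \<circ> r') n) j) \<longlonglongrightarrow> (L(m := l)) j" if "j < Suc m" for j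
  proof (cases "j = m")
    case False
    then show ?thesis
      using LIMSEQ_subseq_LIMSEQ[OF r(2)[rule_format, of j] r'(1)] that by (simp add: o_def)
  qed (use r'(2) in \<open>simp add: o_def\<close>)
  then show ?case using strict_mono_o[OF r(1) r'(1)] by blast
qed

lemma integral_nearest_err_attains_min:
  assumes p: "0 < p" and f: "memLp M p f"
  obtains L where "\<And>v. (\<integral>x. nearest_err p m L (f x) \<partial>M) \<le> (\<integral>x. nearest_err p m v (f x) \<partial>M)"
proof -
  define \<Phi> where "\<Phi> v = (\<integral>x. nearest_err p m v (f x) \<partial>M)" for v
  have bdd: "bdd_below (range \<Phi>)"
    unfolding \<Phi>_def using nearest_err_nonneg by (intro bdd_belowI2[of _ 0] integral_nonneg_AE) auto
  define c where "c = Inf (range \<Phi>)"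
  have c_le: "c \<le> \<Phi> v" for v unfolding c_def using bdd by (simp add: cInf_lower)
  have "\<exists>v. \<Phi> v < c + inverse (real (Suc n))" for n
    using cInf_lessD[of "range \<Phi>" "c + inverse (real (Suc n))"] unfolding c_def by auto
  then obtain X where X: "\<And>n. \<Phi> (X n) < c + inverse (real (Suc n))" by metis
  have lim: "(\<lambda>n. \<Phi> (X n)) \<longlonglongrightarrow> c"
  proof (rule tendsto_sandwich[of "\<lambda>n. c" _ _ "\<lambda>n. c + inverse (real (Suc n))"])
    show "\<forall>\<^sub>F n in sequentially. \<Phi> (X n) \<le> c + inverse (real (Suc n))"
      using X by (intro always_eventually allI less_imp_le)
  qed (use c_le LIMSEQ_inverse_real_of_nat_add in auto)
  obtain r L where r: "strict_mono r" "\<forall>j<m. (\<lambda>n. X (r n) j) \<longlonglongrightarrow> L j"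
    using compact_complete_linorder_coordinates by blast
  have "(\<lambda>n. \<Phi> (X (r n))) \<longlonglongrightarrow> \<Phi> L"
    unfolding \<Phi>_def using r(2) by (intro tendsto_integral_nearest_err[OF p f]) auto
  moreover have "(\<lambda>n. \<Phi> (X (r n))) \<longlonglongrightarrow> c"
    using LIMSEQ_subseq_LIMSEQ[OF lim r(1)] by (simp add: o_def)
  ultimately have "\<Phi> L = c" by (rule LIMSEQ_unique)
  then show ?thesis using that c_le unfolding \<Phi>_def by metis
qed

lemma nearest_value_partition:
  fixes f :: "'a \<Rightarrow> real" and a :: "nat \<Rightarrow> real"
  assumes [measurable]: "f \<in> borel_measurable M" and K: "1 \<le> K"
  shows "\<exists>A. (\<forall>i\<in>{1..K}. A i \<in> sets M) \<and> disjoint_family_on A {1..K} \<and>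
    (\<Union>i\<in>{1..K}. A i) = space M \<and>
    (\<forall>i\<in>{1..K}. \<forall>j\<in>{1..K}. \<forall>x\<in>A i. \<bar>f x - a i\<bar> \<le> \<bar>f x - a j\<bar>)"
proof -
  define nearest where "nearest i x \<longleftrightarrow> i \<in> {1..K} \<and> (\<forall>j\<in>{1..K}. \<bar>f x - a i\<bar> \<le> \<bar>f x - a j\<bar>)"
    for i x
  have "\<exists>i. nearest i x" for x
  proof -
    have "Min ((\<lambda>i. \<bar>f x - a i\<bar>) ` {1..K}) \<in> (\<lambda>i. \<bar>f x - a i\<bar>) ` {1..K}"
      using K by (intro Min_in) auto
    then obtain i where "i \<in> {1..K}" "\<bar>f x - a i\<bar> = Min ((\<lambda>i. \<bar>f x - a i\<bar>) ` {1..K})"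
      by auto
    then show ?thesis unfolding nearest_def by auto
  qed
  then have nearest_idx: "nearest (LEAST i. nearest i x) x" for x by (rule LeastI_ex)
  have [measurable]: "Measurable.pred M (nearest i)" for i
    unfolding nearest_def by measurable
  define A where "A i = {x \<in> space M. (LEAST i. nearest i x) = i}" for i
  have "A i \<in> sets M" for i unfolding A_def by measurable
  moreover have "disjoint_family_on A {1..K}" unfolding A_def disjoint_family_on_def by auto
  moreover have "(\<Union>i\<in>{1..K}. A i) = space M"
    using nearest_idx unfolding A_def nearest_def by auto
  moreover have "\<bar>f x - a i\<bar> \<le> \<bar>f x - a j\<bar>" if "j \<in> {1..K}" "x \<in> A i" for i j x
    using nearest_idx[of x] that unfolding A_def nearest_def by auto
  ultimately show ?thesis by blast
qed

lemma Gpk_Lp_err_le_integral_nearest_err: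
  assumes p: "0 < p" and f: "memLp M p f"
  obtains h where "h \<in> Gpk M p (Suc m)" "Lp_err M p f h \<le> (\<integral>x. nearest_err p m L (f x) \<partial>M)"
proof -
  have f_meas [measurable]: "f \<in> borel_measurable M" using f by (simp add: memLp_def)
  define a where "a i = (if i = 1 then 0 else real_of_ereal (L (i - 2)))" for i
  obtain A where A: "\<forall>i\<in>{1..Suc m}. A i \<in> sets M" "disjoint_family_on A {1..Suc m}"
    "(\<Union>i\<in>{1..Suc m}. A i) = space M"
    "\<forall>i\<in>{1..Suc m}. \<forall>j\<in>{1..Suc m}. \<forall>x\<in>A i. \<bar>f x - a i\<bar> \<le> \<bar>f x - a j\<bar>"
    using nearest_value_partition[OF f_meas, of "Suc m" a] by auto
  define h where "h = step_fun {1..Suc m} a A"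
  have h_near: "\<bar>f x - h x\<bar> \<le> \<bar>f x - a j\<bar>" if "x \<in> space M" "j \<in> {1..Suc m}" for x j
  proof -
    have "x \<in> (\<Union>i\<in>{1..Suc m}. A i)" using A(3) that(1) by simp
    then obtain i where i: "i \<in> {1..Suc m}" "x \<in> A i" by blast
    then have "h x = a i" unfolding h_def using step_fun_eq[OF _ A(2) i] by simp
    moreover have "\<bar>f x - a i\<bar> \<le> \<bar>f x - a j\<bar>" using A(4) i that(2) by blast
    ultimately show ?thesis by simp
  qed
  have h_meas: "h \<in> borel_measurable M" unfolding h_def using A(1) by (intro borel_measurable_step_fun) simp
  have "\<bar>h x\<bar> \<le> \<bar>f x\<bar> + \<bar>f x\<bar>" if "x \<in> space M" for x
    using h_near[OF that, of 1] by (simp add: a_def)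
  then have h_Lp: "memLp M p h"
    using integrable_abs_powr_dominated[OF p, of M f f h] f h_meas by (simp add: memLp_def)
  have "Lp_err M p f h \<le> (\<integral>x. nearest_err p m L (f x) \<partial>M)"
    unfolding Lp_err_def
  proof (rule integral_mono[OF memLp_integrable_diff_powr[OF p f h_Lp] integrable_nearest_err[OF f]])
    fix x assume x: "x \<in> space M"
    show "\<bar>f x - h x\<bar> powr p \<le> nearest_err p m L (f x)"
    proof (rule nearest_err_ge[OF p])
      show "\<bar>f x - h x\<bar> \<le> \<bar>f x\<bar>" using h_near[OF x, of 1] by (simp add: a_def)
      show "\<bar>f x - h x\<bar> \<le> \<bar>f x - real_of_ereal (L j)\<bar>" if "j < m" for j
        using h_near[OF x, of "j + 2"] that by (simp add: a_def)
    qed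
  qed
  moreover have "h \<in> Gpk M p (Suc m)"
    unfolding h_def by (rule GpkI[OF h_Lp[unfolded h_def]]) (use A in auto)
  ultimately show ?thesis using that by blast
qed

lemma Lp_err_ge_integral_nearest_err:
  assumes inf: "emeasure M (space M) = \<infinity>" and p: "0 < p" and f: "memLp M p f"
    and h: "h \<in> Gpk M p (Suc m)"
  obtains v where "(\<integral>x. nearest_err p m v (f x) \<partial>M) \<le> Lp_err M p f h"
proof -
  obtain l A a where G: "memLp M p h" "l \<le> Suc m" "\<And>i. i \<in> {1..l} \<Longrightarrow> A i \<in> sets M"
    "disjoint_family_on A {1..l}" "(\<Union>i\<in>{1..l}. A i) = space M" and h_eq: "h = step_fun {1..l} a A"
    by (rule GpkE[OF h]) iprover
  have h_at: "h x = a i" if "i \<in> {1..l}" "x \<in> A i" for i x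
    unfolding h_eq using step_fun_eq[OF _ G(4) that] by simp
  obtain i0 where i0: "i0 \<in> {1..l}" "emeasure M (A i0) = \<infinity>"
    by (rule infinite_emeasure_piece[OF inf finite_atLeastAtMost G(3) G(5)])
  have "a i0 = 0"
  proof (rule ccontr)
    assume "a i0 \<noteq> 0"
    then have "emeasure M (A i0) < \<infinity>"
      using memLp_emeasure_const_finite[OF G(1) p G(3)[OF i0(1)]] h_at[OF i0(1)] by blast
    then show False using i0(2) by simp
  qed
  (* The piece on which h vanishes is covered by the value 0 built into nearest_err;
     the other at most m values of h are listed in v. *)
  define v where "v j = ereal (a (if j + 1 < i0 then j + 1 else j + 2))" for j
  have pointwise: "nearest_err p m v (f x) \<le> \<bar>f x - h x\<bar> powr p" if "x \<in> space M" for x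
  proof -
    have "x \<in> (\<Union>i\<in>{1..l}. A i)" using G(5) that by simp
    then obtain i where i: "i \<in> {1..l}" "x \<in> A i" by blast
    show ?thesis
    proof (cases "i = i0")
      case True
      then show ?thesis using h_at[OF i] \<open>a i0 = 0\<close> nearest_err_le_abs_powr by simp
    next
      case False
      have "\<exists>j<m. (if j + 1 < i0 then j + 1 else j + 2) = i"
        using i(1) i0(1) G(2) False
        by (intro exI[of _ "if i < i0 then i - 1 else i - 2"]) auto
      then obtain j where "j < m" "v j = ereal (a i)" unfolding v_def by auto
      then show ?thesis using nearest_err_le[of j m p v "f x"] h_at[OF i] by simp
    qed
  qed
  have "(\<integral>x. nearest_err p m v (f x) \<partial>M) \<le> Lp_err M p f h"
    unfolding Lp_err_def
    by (rule integral_mono[OF integrable_nearest_err[OF f] memLp_integrable_diff_powr[OF p f G(1)] pointwise])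
  then show ?thesis by (rule that)
qed

theorem proximinal_Gpk:
  assumes inf: "emeasure M (space M) = \<infinity>" and p: "0 < p" and k: "1 \<le> k"
  shows "proximinal M p k"
  unfolding proximinal_def
proof (intro allI impI)
  fix f assume f: "memLp M p f"
  obtain m where k_eq: "k = Suc m" using k by (cases k) auto
  obtain L where L: "\<And>v. (\<integral>x. nearest_err p m L (f x) \<partial>M) \<le> (\<integral>x. nearest_err p m v (f x) \<partial>M)"
    by (rule integral_nearest_err_attains_min[OF p f, where m = m]) iprover
  obtain g where g: "g \<in> Gpk M p k" "Lp_err M p f g \<le> (\<integral>x. nearest_err p m L (f x) \<partial>M)"
    unfolding k_eq by (rule Gpk_Lp_err_le_integral_nearest_err[OF p f])
  have "Lp_err M p f g \<le> Lp_err M p f h" if h: "h \<in> Gpk M p k" for h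
  proof -
    obtain v where "(\<integral>x. nearest_err p m v (f x) \<partial>M) \<le> Lp_err M p f h"
      using h unfolding k_eq by (rule Lp_err_ge_integral_nearest_err[OF inf p f])
    then show ?thesis using g(2) L[of v] by linarith
  qed
  then show "\<exists>g. minimizer M p k f g" using g(1) minimizer_iff_Lp_err[OF p] by blast
qed

section \<open>\<open>p\<close>-th means\<close>

definition set_err :: "'a measure \<Rightarrow> real \<Rightarrow> ('a \<Rightarrow> real) \<Rightarrow> 'a set \<Rightarrow> real \<Rightarrow> real" where
  "set_err M p f S c = (\<integral>x. indicator S x * \<bar>f x - c\<bar> powr p \<partial>M)"

lemma is_pth_mean_iff_set_err: "is_pth_mean M p f S a \<longleftrightarrow> (\<forall>c. set_err M p f S a \<le> set_err M p f S c)"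
  by (simp add: is_pth_mean_def set_lebesgue_integral_def set_err_def)

lemma set_err_null:
  assumes "S \<in> sets M" "emeasure M S = 0"
  shows "set_err M p f S c = 0"
proof -
  have "AE x in M. x \<notin> S" using assms AE_iff_null_sets[of S M] by (simp add: null_sets_def)
  then have "AE x in M. indicator S x * \<bar>f x - c\<bar> powr p = 0" by eventually_elim simp
  then show ?thesis unfolding set_err_def by (rule integral_eq_zero_AE)
qed

lemma pth_mean_unique:
  assumes p: "1 < p" and f: "memLp M p f" and S: "S \<in> sets M" "emeasure M S < \<infinity>" "emeasure M S \<noteq> 0"
    and a: "is_pth_mean M p f S a" and a': "is_pth_mean M p f S a'"
  shows "a' = a"
proof (rule ccontr)
  assume "a' \<noteq> a"
  define m where "m = (a + a') / 2"
  have I: "integrable M (\<lambda>x. indicator S x * \<bar>f x - c\<bar> powr p)" for c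
    using p f S by (intro integrable_indicator_abs_diff_powr) auto
  define d where "d x = (indicator S x * \<bar>f x - a\<bar> powr p + indicator S x * \<bar>f x - a'\<bar> powr p) / 2
    - indicator S x * \<bar>f x - m\<bar> powr p" for x
  have d_int: "integrable M d" unfolding d_def using I by simp
  have "integral\<^sup>L M d = (set_err M p f S a + set_err M p f S a') / 2 - set_err M p f S m"
    unfolding d_def set_err_def using I by simp
  moreover have "set_err M p f S a = set_err M p f S a'" "set_err M p f S a \<le> set_err M p f S m"
    using a a' unfolding is_pth_mean_iff_set_err by (auto intro: order.antisym)
  ultimately have d_int_le: "integral\<^sup>L M d \<le> 0" by simp
  have d_pos: "0 < d x" if "x \<in> S" for x
  proof -
    have mid: "((f x - a) + (f x - a')) / 2 = f x - m" by (simp add: m_def field_simps)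
    have "\<bar>f x - m\<bar> powr p < (\<bar>f x - a\<bar> powr p + \<bar>f x - a'\<bar> powr p) / 2"
      using abs_powr_midpoint_less[OF p, of "f x - a" "f x - a'"] \<open>a' \<noteq> a\<close> unfolding mid by simp
    then show ?thesis using that by (simp add: d_def)
  qed
  have d_nonneg: "0 \<le> d x" for x
    using d_pos[of x] by (cases "x \<in> S") (auto simp: d_def)
  have "0 \<le> integral\<^sup>L M d" using d_nonneg by (intro integral_nonneg_AE) auto
  then have "integral\<^sup>L M d = 0" using d_int_le by simp
  then have "AE x in M. d x = 0"
    using integral_nonneg_eq_0_iff_AE[OF d_int] d_nonneg by simp
  then have "AE x in M. x \<notin> S"
    by eventually_elim (use d_pos in fastforce)
  then have "emeasure M S = 0" using AE_iff_null_sets[OF S(1)] by (simp add: null_sets_def)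
  then show False using S(3) by simp
qed

lemma pth_mean_1_bounded:
  assumes f: "memLp M 1 f" and S: "S \<in> sets M" "emeasure M S < \<infinity>" "emeasure M S \<noteq> 0"
    and c: "is_pth_mean M 1 f S c"
  shows "\<bar>c\<bar> \<le> 2 * set_err M 1 f S 0 / measure M S"
proof -
  have I: "integrable M (\<lambda>x. indicator S x * \<bar>f x - c\<bar> powr 1)" for c
    using f S by (intro integrable_indicator_abs_diff_powr) auto
  have "emeasure M S = ennreal (measure M S)" using S(2) by (intro emeasure_eq_ennreal_measure) simp
  then have pos: "0 < measure M S" using S(3) measure_nonneg[of M S] by (auto simp: less_le)
  have "\<bar>c\<bar> * measure M S = (\<integral>x. indicator S x * \<bar>c\<bar> \<partial>M)"
    using S(1,2) by (simp add: mult.commute)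
  also have "\<dots> \<le> (\<integral>x. indicator S x * \<bar>f x - c\<bar> powr 1 + indicator S x * \<bar>f x - 0\<bar> powr 1 \<partial>M)"
  proof (rule integral_mono)
    show "integrable M (\<lambda>x. indicator S x * \<bar>c\<bar>)"
      using integrable_real_indicator[OF S(1,2)] by (rule integrable_mult_left)
    show "integrable M (\<lambda>x. indicator S x * \<bar>f x - c\<bar> powr 1 + indicator S x * \<bar>f x - 0\<bar> powr 1)"
      by (rule Bochner_Integration.integrable_add[OF I I])
    show "indicator S x * \<bar>c\<bar> \<le> indicator S x * \<bar>f x - c\<bar> powr 1 + indicator S x * \<bar>f x - 0\<bar> powr 1"
      for x using abs_triangle_ineq4[of "f x" "f x - c"] by (simp add: indicator_def)
  qed
  also have "\<dots> = set_err M 1 f S c + set_err M 1 f S 0"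
    unfolding set_err_def by (rule Bochner_Integration.integral_add[OF I I])
  also have "\<dots> \<le> 2 * set_err M 1 f S 0"
    using c unfolding is_pth_mean_iff_set_err by (smt (verit))
  finally show ?thesis using pos by (simp add: field_simps)
qed

lemma pth_mean_1_between:
  assumes f: "memLp M 1 f" and S: "S \<in> sets M" "emeasure M S < \<infinity>"
    and a1: "is_pth_mean M 1 f S a1" and a2: "is_pth_mean M 1 f S a2" and m: "a1 \<le> m" "m \<le> a2"
  shows "is_pth_mean M 1 f S m"
proof (cases "a1 = a2")
  case True
  then show ?thesis using a1 m by simp
next
  case False
  define t where "t = (a2 - m) / (a2 - a1)"
  have "0 < a2 - a1" using m False by simp
  then have "0 \<le> t" "t \<le> 1" "t * (a2 - a1) = a2 - m"
    using m by (simp_all add: t_def)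
  then have t: "0 \<le> t" "t \<le> 1" "m = t * a1 + (1 - t) * a2"
    by (simp_all add: algebra_simps)
  have I: "integrable M (\<lambda>x. indicator S x * \<bar>f x - c\<bar> powr 1)" for c
    using f S by (intro integrable_indicator_abs_diff_powr) auto
  have pointwise: "\<bar>y - m\<bar> \<le> t * \<bar>y - a1\<bar> + (1 - t) * \<bar>y - a2\<bar>" for y
  proof -
    have "y - m = t * (y - a1) + (1 - t) * (y - a2)" using t(3) by (simp add: algebra_simps)
    then show ?thesis using t(1,2) abs_triangle_ineq[of "t * (y - a1)" "(1 - t) * (y - a2)"]
      by (simp add: abs_mult)
  qed
  have Ic: "integrable M (\<lambda>x. t * (indicator S x * \<bar>f x - a1\<bar> powr 1) + (1 - t) * (indicator S x * \<bar>f x - a2\<bar> powr 1))"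
    using I by (intro Bochner_Integration.integrable_add integrable_mult_right)
  have "set_err M 1 f S m \<le>
      (\<integral>x. t * (indicator S x * \<bar>f x - a1\<bar> powr 1) + (1 - t) * (indicator S x * \<bar>f x - a2\<bar> powr 1) \<partial>M)"
    unfolding set_err_def
  proof (rule integral_mono[OF I Ic])
    show "indicator S x * \<bar>f x - m\<bar> powr 1
      \<le> t * (indicator S x * \<bar>f x - a1\<bar> powr 1) + (1 - t) * (indicator S x * \<bar>f x - a2\<bar> powr 1)" for x
      using pointwise[of "f x"] by (simp add: indicator_def)
  qed
  also have "\<dots> = t * set_err M 1 f S a1 + (1 - t) * set_err M 1 f S a2"
    unfolding set_err_def using I by simp
  also have "\<dots> = set_err M 1 f S a2"
    using a1 a2 unfolding is_pth_mean_iff_set_err by (simp add: order.antisym algebra_simps)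
  finally show ?thesis using a2 unfolding is_pth_mean_iff_set_err by (meson order_trans)
qed

lemma pth_mean_1_midpoint:
  assumes f: "memLp M 1 f" and S: "S \<in> sets M" "emeasure M S < \<infinity>" "emeasure M S \<noteq> 0"
    and a: "is_pth_mean M 1 f S a"
  shows "is_pth_mean M 1 f S ((Inf {a. is_pth_mean M 1 f S a} + Sup {a. is_pth_mean M 1 f S a}) / 2)"
proof -
  define P where "P = {a. is_pth_mean M 1 f S a}"
  define m where "m = (Inf P + Sup P) / 2"
  have aP: "a \<in> P" using a by (simp add: P_def)
  define B where "B = 2 * set_err M 1 f S 0 / measure M S"
  have bounded: "- B \<le> c \<and> c \<le> B" if "c \<in> P" for c
    using pth_mean_1_bounded[OF f S, of c] that by (simp add: P_def B_def abs_le_iff)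
  have bdd: "bdd_below P" "bdd_above P"
    using bounded by (auto intro!: bdd_belowI[of _ "- B"] bdd_aboveI[of _ B])
  have Inf_le_Sup: "Inf P \<le> a" "a \<le> Sup P" using cInf_lower[OF aP bdd(1)] cSup_upper[OF aP bdd(2)] .
  have "m \<in> P"
  proof (cases "Inf P = Sup P")
    case True
    then show ?thesis using aP Inf_le_Sup by (simp add: m_def)
  next
    case False
    then have "Inf P < m" "m < Sup P" using Inf_le_Sup by (auto simp: m_def)
    then obtain a1 a2 where a12: "a1 \<in> P" "a1 < m" "a2 \<in> P" "m < a2"
      using cInf_lessD[of P m] less_cSupD[of P m] aP by (metis empty_iff)
    have "is_pth_mean M 1 f S m"
      by (rule pth_mean_1_between[OF f S(1,2), of a1 a2]) (use a12 in \<open>simp_all add: P_def\<close>)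
    then show ?thesis by (simp add: P_def)
  qed
  then show ?thesis by (simp add: m_def P_def)
qed

lemma Mp_is_pth_mean:
  assumes p: "1 \<le> p" and f: "memLp M p f"
    and S: "S \<in> sets M" "emeasure M S < \<infinity>" "emeasure M S \<noteq> 0" and a: "is_pth_mean M p f S a"
  shows "is_pth_mean M p f S (Mp M p f S)"
proof (cases "1 < p")
  case True
  then have "(THE a. is_pth_mean M p f S a) = a"
    using a pth_mean_unique[OF True f S] by blast
  then show ?thesis using True S(3) a by (simp add: Mp_def)
next
  case False
  then have "p = 1" using p by simp
  then show ?thesis using pth_mean_1_midpoint[OF _ S] f a S(3) by (simp add: Mp_def)
qed

lemma Lp_err_step_fun:
  assumes "finite I" "disjoint_family_on C I" "(\<Union>i\<in>I. C i) = space M"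
    and int: "\<And>i. i \<in> I \<Longrightarrow> integrable M (\<lambda>x. indicator (C i) x * \<bar>f x - c i\<bar> powr p)"
  shows "Lp_err M p f (step_fun I c C) = (\<Sum>i\<in>I. set_err M p f (C i) (c i))"
proof -
  have "\<bar>f x - step_fun I c C x\<bar> powr p = (\<Sum>i\<in>I. indicator (C i) x * \<bar>f x - c i\<bar> powr p)"
    if "x \<in> space M" for x
  proof -
    have "x \<in> (\<Union>i\<in>I. C i)" using assms(3) that by simp
    then obtain i where i: "i \<in> I" "x \<in> C i" by blast
    have "step_fun I c C x = c i" by (rule step_fun_eq[OF assms(1,2) i])
    moreover have "step_fun I (\<lambda>j. \<bar>f x - c j\<bar> powr p) C x = \<bar>f x - c i\<bar> powr p"
      by (rule step_fun_eq[OF assms(1,2) i])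
    ultimately show ?thesis by (simp add: mult.commute)
  qed
  then have "Lp_err M p f (step_fun I c C) = (\<integral>x. (\<Sum>i\<in>I. indicator (C i) x * \<bar>f x - c i\<bar> powr p) \<partial>M)"
    unfolding Lp_err_def by (rule Bochner_Integration.integral_cong[OF refl])
  also have "\<dots> = (\<Sum>i\<in>I. set_err M p f (C i) (c i))"
    unfolding set_err_def using int by (rule Bochner_Integration.integral_sum)
  finally show ?thesis .
qed

lemma memLp_step_fun:
  assumes "finite I" "\<And>i. i \<in> I \<Longrightarrow> C i \<in> sets M" "disjoint_family_on C I" "(\<Union>i\<in>I. C i) = space M"
    and fin: "\<And>i. i \<in> I \<Longrightarrow> c i = 0 \<or> emeasure M (C i) < \<infinity>"
  shows "memLp M p (step_fun I c C)"
proof -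
  have "\<bar>step_fun I c C x\<bar> powr p = step_fun I (\<lambda>i. \<bar>c i\<bar> powr p) C x" if "x \<in> space M" for x
  proof -
    have "x \<in> (\<Union>i\<in>I. C i)" using assms(4) that by simp
    then obtain i where i: "i \<in> I" "x \<in> C i" by blast
    show ?thesis using step_fun_eq[OF assms(1,3) i, of c] step_fun_eq[OF assms(1,3) i] by simp
  qed
  moreover have "integrable M (step_fun I (\<lambda>i. \<bar>c i\<bar> powr p) C)"
  proof (rule Bochner_Integration.integrable_sum)
    fix i assume i: "i \<in> I"
    show "integrable M (\<lambda>x. \<bar>c i\<bar> powr p * indicator (C i) x)"
      using fin[OF i] assms(2)[OF i] by auto
  qed
  ultimately have "integrable M (\<lambda>x. \<bar>step_fun I c C x\<bar> powr p)"
    by (subst Bochner_Integration.integrable_cong[OF refl]) auto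
  then show ?thesis using borel_measurable_step_fun[OF assms(2)] by (simp add: memLp_def)
qed

section \<open>Structure of a minimizer\<close>

locale Gpk_minimizer =
  fixes M :: "'a measure" and p :: real and k :: nat and f :: "'a \<Rightarrow> real"
    and q :: nat and b :: "nat \<Rightarrow> real" and A :: "nat \<Rightarrow> 'a set"
  assumes space_infinite: "emeasure M (space M) = \<infinity>" and p: "1 \<le> p" and f: "memLp M p f"
    and q_le_k: "q \<le> k" and b_strict_mono: "strict_mono_on {1..q} b"
    and A_sets: "\<And>i. i \<in> {1..q} \<Longrightarrow> A i \<in> sets M"
    and A_disjoint: "disjoint_family_on A {1..q}" and A_cover: "(\<Union>i\<in>{1..q}. A i) = space M"
    and g_minimizer: "minimizer M p k f (step_fun {1..q} b A)"
begin

abbreviation "g \<equiv> step_fun {1..q} b A"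
abbreviation "C \<equiv> Cset M q b f"
abbreviation "g\<^sub>C \<equiv> step_fun {1..q} b C"

lemma p_pos: "0 < p" using p by simp

lemma f_measurable[measurable]: "f \<in> borel_measurable M" using f by (simp add: memLp_def)

lemma g_Gpk: "g \<in> Gpk M p k" and Lp_err_g_le: "h \<in> Gpk M p k \<Longrightarrow> Lp_err M p f g \<le> Lp_err M p f h"
  using g_minimizer unfolding minimizer_iff_Lp_err[OF p_pos] by auto

lemma g_memLp: "memLp M p g" using g_Gpk by (elim GpkE) simp

lemma g_eq: "i \<in> {1..q} \<Longrightarrow> x \<in> A i \<Longrightarrow> g x = b i"
  using step_fun_eq[OF _ A_disjoint] by simp

lemma q_pos: "1 \<le> q"
proof (rule ccontr)
  assume "\<not> 1 \<le> q"
  then have "space M = {}" using A_cover by simp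
  then show False using space_infinite by simp
qed

lemma exists_zero_value: "\<exists>s\<in>{1..q}. b s = 0"
proof -
  obtain i where i: "i \<in> {1..q}" "emeasure M (A i) = \<infinity>"
    by (rule infinite_emeasure_piece[OF space_infinite finite_atLeastAtMost A_sets A_cover]) iprover
  have "b i = 0"
  proof (rule ccontr)
    assume "b i \<noteq> 0"
    then have "emeasure M (A i) < \<infinity>"
      using memLp_emeasure_const_finite[OF g_memLp p_pos A_sets[OF i(1)]] g_eq[OF i(1)] by blast
    then show False using i(2) by simp
  qed
  then show ?thesis using i(1) by blast
qed

lemma b_less: "i \<in> {1..q} \<Longrightarrow> j \<in> {1..q} \<Longrightarrow> i < j \<Longrightarrow> b i < b j"
  using strict_mono_onD[OF b_strict_mono] by blast

lemma b_le: "i \<in> {1..q} \<Longrightarrow> j \<in> {1..q} \<Longrightarrow> i \<le> j \<Longrightarrow> b i \<le> b j"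
  using b_less by (cases "i = j") (auto simp: less_le)

lemma b_inj: "i \<in> {1..q} \<Longrightarrow> j \<in> {1..q} \<Longrightarrow> b i = b j \<Longrightarrow> i = j"
  using b_less by (metis less_irrefl nat_neq_iff)

lemma unique_zero_value: "\<exists>!s. s \<in> {1..q} \<and> b s = 0"
proof -
  obtain s where s: "s \<in> {1..q}" "b s = 0" using exists_zero_value by blast
  show ?thesis
  proof (rule ex1I[of _ s])
    show "t = s" if "t \<in> {1..q} \<and> b t = 0" for t using that s b_inj[of t s] by simp
  qed (use s in simp)
qed

lemma thr_mid: "2 \<le> i \<Longrightarrow> i \<le> q \<Longrightarrow> thr q b i = ereal ((b (i - 1) + b i) / 2)"
  by (simp add: thr_def)

lemma thr_mono: "i \<le> j \<Longrightarrow> thr q b i \<le> thr q b j"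
proof (cases "i \<le> 1 \<or> q + 1 \<le> j")
  case False
  moreover assume "i \<le> j"
  ultimately have "b (i - 1) \<le> b (j - 1)" "b i \<le> b j" by (auto intro!: b_le)
  then show ?thesis using False \<open>i \<le> j\<close> by (simp add: thr_mid)
qed (auto simp: thr_def)

lemma C_sets[measurable]: "C i \<in> sets M"
  unfolding Cset_def by measurable

lemma C_cover: "x \<in> space M \<Longrightarrow> \<exists>i\<in>{1..q}. x \<in> C i"
proof -
  assume x: "x \<in> space M"
  define I where "I = {i \<in> {1..q}. thr q b i \<le> ereal (f x)}"
  have "1 \<in> I" using q_pos by (simp add: I_def thr_def)
  then have fin_ne: "finite I" "I \<noteq> {}" unfolding I_def by auto
  define i where "i = Max I"
  have i: "i \<in> I" unfolding i_def using Max_in[OF fin_ne] .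
  have "ereal (f x) < thr q b (Suc i)"
  proof (cases "Suc i \<le> q")
    case True
    then have "Suc i \<notin> I" using Max_ge[OF fin_ne(1), of "Suc i"] unfolding i_def by auto
    then show ?thesis using True unfolding I_def by auto
  next
    case False
    then show ?thesis using i unfolding I_def by (simp add: thr_def)
  qed
  then show ?thesis using i x unfolding Cset_def I_def by auto
qed

lemma C_disjoint: "disjoint_family_on C {1..q}"
proof -
  have "C i \<inter> C j = {}" if "i < j" for i j
  proof -
    have "thr q b (Suc i) \<le> thr q b j" using that by (intro thr_mono) simp
    then show ?thesis unfolding Cset_def by (auto dest: order.strict_trans2)
  qed
  then show ?thesis unfolding disjoint_family_on_def by (metis Int_commute nat_neq_iff)
qed

lemma C_union: "(\<Union>i\<in>{1..q}. C i) = space M"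
  using C_cover by (auto simp: Cset_def)

lemma C_nearest:
  assumes i: "i \<in> {1..q}" and j: "j \<in> {1..q}" and x: "x \<in> C i"
  shows "\<bar>f x - b i\<bar> \<le> \<bar>f x - b j\<bar>"
proof -
  consider "j = i" | "i < j" | "j < i" by linarith
  then show ?thesis
  proof cases
    case 2
    have "Suc i \<in> {1..q}" using 2 i j by auto
    then have "f x < (b i + b (Suc i)) / 2" using x i thr_mid[of "Suc i"] by (simp add: Cset_def)
    moreover have "b (Suc i) \<le> b j" using \<open>Suc i \<in> {1..q}\<close> j 2 by (intro b_le) auto
    ultimately show ?thesis using b_less[OF i j 2] by (simp add: abs_if; linarith)
  next
    case 3
    have "i - 1 \<in> {1..q}" "2 \<le> i" "i \<le> q" using 3 i j by auto
    then have "(b (i - 1) + b i) / 2 \<le> f x" using x by (simp add: Cset_def thr_mid)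
    moreover have "b j \<le> b (i - 1)" using \<open>i - 1 \<in> {1..q}\<close> j 3 by (intro b_le) auto
    ultimately show ?thesis using b_less[OF j i 3] by (simp add: abs_if; linarith)
  qed simp
qed

lemma gC_eq: "i \<in> {1..q} \<Longrightarrow> x \<in> C i \<Longrightarrow> g\<^sub>C x = b i"
  using step_fun_eq[OF _ C_disjoint] by simp

lemma gC_closer: "x \<in> space M \<Longrightarrow> \<bar>f x - g\<^sub>C x\<bar> \<le> \<bar>f x - g x\<bar>"
proof -
  assume x: "x \<in> space M"
  obtain i where i: "i \<in> {1..q}" "x \<in> C i" using C_cover[OF x] by blast
  have "x \<in> (\<Union>i\<in>{1..q}. A i)" using A_cover x by simp
  then obtain j where j: "j \<in> {1..q}" "x \<in> A j" by blast
  show ?thesis using C_nearest[OF i(1) j(1) i(2)] gC_eq[OF i] g_eq[OF j] by simp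
qed

lemma gC_memLp: "memLp M p g\<^sub>C"
proof -
  have meas: "g\<^sub>C \<in> borel_measurable M" by (rule borel_measurable_step_fun) simp
  have "integrable M (\<lambda>x. \<bar>g\<^sub>C x\<bar> powr p)"
  proof (rule integrable_abs_powr_dominated[OF p_pos, of M f "\<lambda>x. f x - g x"])
    show "integrable M (\<lambda>x. \<bar>f x\<bar> powr p)" using f by (simp add: memLp_def)
    show "integrable M (\<lambda>x. \<bar>f x - g x\<bar> powr p)" by (rule memLp_integrable_diff_powr[OF p_pos f g_memLp])
    show "g\<^sub>C \<in> borel_measurable M" by (rule meas)
    show "\<bar>g\<^sub>C x\<bar> \<le> \<bar>f x\<bar> + \<bar>f x - g x\<bar>" if "x \<in> space M" for x
      using gC_closer[OF that] by linarith
  qed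
  then show ?thesis using meas unfolding memLp_def by blast
qed

lemma Lp_err_gC_le: "h \<in> Gpk M p k \<Longrightarrow> Lp_err M p f g\<^sub>C \<le> Lp_err M p f h"
proof -
  assume h: "h \<in> Gpk M p k"
  have "Lp_err M p f g\<^sub>C \<le> Lp_err M p f g"
    unfolding Lp_err_def
  proof (rule integral_mono[OF memLp_integrable_diff_powr[OF p_pos f gC_memLp]
        memLp_integrable_diff_powr[OF p_pos f g_memLp]])
    show "\<bar>f x - g\<^sub>C x\<bar> powr p \<le> \<bar>f x - g x\<bar> powr p" if "x \<in> space M" for x
      using gC_closer[OF that] p_pos by (intro powr_mono2) auto
  qed
  then show ?thesis using Lp_err_g_le[OF h] by linarith
qed

end

locale Gpk_minimizer_zero = Gpk_minimizer +
  fixes s :: nat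
  assumes s: "s \<in> {1..q}" and b_s: "b s = 0"
begin

lemma thr_around_zero: "thr q b s < 0" "0 < thr q b (Suc s)"
proof -
  show "thr q b s < 0"
  proof (cases "s \<le> 1")
    case False
    then have "b (s - 1) < b s" using s by (intro b_less) auto
    then show ?thesis using False s b_s by (simp add: thr_mid)
  qed (simp add: thr_def)
  show "0 < thr q b (Suc s)"
  proof (cases "Suc s \<le> q")
    case True
    then have "b s < b (Suc s)" using s by (intro b_less) auto
    then show ?thesis using True s b_s thr_mid[of "Suc s"] by simp
  qed (use s in \<open>simp add: thr_def\<close>)
qed

lemma C_finite: "i \<in> {1..q} \<Longrightarrow> i \<noteq> s \<Longrightarrow> emeasure M (C i) < \<infinity>"
  using memLp_emeasure_const_finite[OF gC_memLp p_pos C_sets, of i "b i"] gC_eq b_inj[OF _ s] b_s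
  by fastforce

lemma C_s_infinite: "emeasure M (C s) = \<infinity>"
proof -
  obtain i where "i \<in> {1..q}" "emeasure M (C i) = \<infinity>"
    by (rule infinite_emeasure_piece[OF space_infinite finite_atLeastAtMost C_sets C_union])
  then show ?thesis using C_finite[of i] by (cases "i = s") auto
qed

lemma memLp_step_C: "c s = 0 \<Longrightarrow> memLp M p (step_fun {1..q} c C)"
  using C_finite by (intro memLp_step_fun C_disjoint C_union) auto

lemma step_C_Gpk: "c s = 0 \<Longrightarrow> q \<le> k' \<Longrightarrow> step_fun {1..q} c C \<in> Gpk M p k'"
  using memLp_step_C by (intro GpkI C_disjoint C_union) auto

lemma Lp_err_step_C:
  "c s = 0 \<Longrightarrow> Lp_err M p f (step_fun {1..q} c C) = (\<Sum>i\<in>{1..q}. set_err M p f (C i) (c i))"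
  using C_finite p_pos f by (intro Lp_err_step_fun C_disjoint C_union integrable_indicator_abs_diff_powr) auto

lemma b_is_pth_mean: "i \<in> {1..q} \<Longrightarrow> i \<noteq> s \<Longrightarrow> is_pth_mean M p f (C i) (b i)"
proof (rule ccontr)
  assume i: "i \<in> {1..q}" "i \<noteq> s" and "\<not> is_pth_mean M p f (C i) (b i)"
  then obtain c0 where c0: "set_err M p f (C i) c0 < set_err M p f (C i) (b i)"
    unfolding is_pth_mean_iff_set_err by (auto simp: not_le)
  have "(\<Sum>j\<in>{1..q}. set_err M p f (C j) ((b(i := c0)) j))
      = set_err M p f (C i) c0 + (\<Sum>j\<in>{1..q} - {i}. set_err M p f (C j) (b j))"
    using sum.remove[OF _ i(1), of "\<lambda>j. set_err M p f (C j) ((b(i := c0)) j)"] by simp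
  also have "\<dots> < (\<Sum>j\<in>{1..q}. set_err M p f (C j) (b j))"
    using c0 sum.remove[OF _ i(1), of "\<lambda>j. set_err M p f (C j) (b j)"] by simp
  finally have "Lp_err M p f (step_fun {1..q} (b(i := c0)) C) < Lp_err M p f g\<^sub>C"
    using Lp_err_step_C[of "b(i := c0)"] Lp_err_step_C[of b] b_s i(2) by simp
  moreover have "Lp_err M p f g\<^sub>C \<le> Lp_err M p f (step_fun {1..q} (b(i := c0)) C)"
    using b_s i(2) by (intro Lp_err_gC_le step_C_Gpk q_le_k) simp
  ultimately show False by simp
qed

definition mean_values :: "nat \<Rightarrow> real" where
  "mean_values i = (if i = s then 0 else Mp M p f (C i))"

lemma Lp_err_mean_values: "Lp_err M p f (step_fun {1..q} mean_values C) = Lp_err M p f g\<^sub>C"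
proof -
  have "set_err M p f (C i) (mean_values i) = set_err M p f (C i) (b i)" if i: "i \<in> {1..q}" for i
  proof (cases "i = s \<or> emeasure M (C i) = 0")
    case True
    then show ?thesis using b_s set_err_null[OF C_sets] by (auto simp: mean_values_def)
  next
    case False
    then have "is_pth_mean M p f (C i) (Mp M p f (C i))"
      using Mp_is_pth_mean[OF p f C_sets C_finite[OF i] _ b_is_pth_mean[OF i]] by simp
    then show ?thesis
      using b_is_pth_mean[OF i] False unfolding is_pth_mean_iff_set_err
      by (auto simp: mean_values_def intro: order.antisym)
  qed
  then show ?thesis using Lp_err_step_C[of mean_values] Lp_err_step_C[of b] b_s
    by (simp add: mean_values_def)
qed

lemma minimizer_mean_values:
  assumes "q \<le> k'" "k' \<le> k"
  shows "minimizer M p k' f (step_fun {1..q} mean_values C)"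
  unfolding minimizer_iff_Lp_err[OF p_pos] Lp_err_mean_values
proof
  show "step_fun {1..q} mean_values C \<in> Gpk M p k'"
    using assms(1) by (intro step_C_Gpk) (simp_all add: mean_values_def)
  show "\<forall>h\<in>Gpk M p k'. Lp_err M p f g\<^sub>C \<le> Lp_err M p f h"
    using Gpk_mono[OF assms(2)] Lp_err_gC_le by blast
qed

lemma C_pos_if_fewest_values:
  assumes least: "q = (LEAST n. \<exists>g'. minimizer M p k f g' \<and> card (g' ` space M) = n)"
    and i: "i \<in> {1..q}"
  shows "0 < emeasure M (C i)"
proof (rule ccontr)
  assume "\<not> 0 < emeasure M (C i)"
  then have null: "emeasure M (C i) = 0" by (simp add: not_gr_zero)
  then have "i \<noteq> s" using C_s_infinite by auto
  (* on the null cell C i the value Mp M p f (C i) is 0, the value already taken on C s *)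
  have "step_fun {1..q} mean_values C ` space M \<subseteq> mean_values ` ({1..q} - {i})"
  proof
    fix y assume "y \<in> step_fun {1..q} mean_values C ` space M"
    then obtain x where x: "x \<in> space M" "y = step_fun {1..q} mean_values C x" by blast
    obtain j where j: "j \<in> {1..q}" "x \<in> C j" using C_cover[OF x(1)] by blast
    have y: "y = mean_values j" using x(2) step_fun_eq[OF _ C_disjoint j] by simp
    show "y \<in> mean_values ` ({1..q} - {i})"
    proof (cases "j = i")
      case True
      then have "y = mean_values s" using y null \<open>i \<noteq> s\<close> by (simp add: mean_values_def Mp_def)
      then show ?thesis using s \<open>i \<noteq> s\<close> by blast
    qed (use j y in blast)
  qed
  then have "card (step_fun {1..q} mean_values C ` space M) \<le> card (mean_values ` ({1..q} - {i}))"
    by (intro card_mono) auto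
  also have "\<dots> \<le> q - 1" using card_image_le[of "{1..q} - {i}" mean_values] i by simp
  finally have "card (step_fun {1..q} mean_values C ` space M) < q" using q_pos by linarith
  moreover have "(LEAST n. \<exists>g'. minimizer M p k f g' \<and> card (g' ` space M) = n)
      \<le> card (step_fun {1..q} mean_values C ` space M)"
    using minimizer_mean_values[OF q_le_k order_refl] by (intro Least_le exI conjI) auto
  ultimately show False using least by simp
qed

lemma minimizer_structure:
  "thr q b s < 0 \<and> 0 < thr q b (Suc s)
    \<and> (\<forall>i\<in>{1..q}. i \<noteq> s \<longrightarrow> emeasure M (C i) < \<infinity>)
    \<and> (\<forall>i\<in>{1..q}. i \<noteq> s \<longrightarrow> emeasure M (C i) > 0 \<longrightarrow> is_pth_mean M p f (C i) (b i))
    \<and> minimizer M p q f (\<lambda>x. \<Sum>i\<in>{1..q}. (if i = s then 0 else Mp M p f (C i)) * indicator (C i) x)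
    \<and> (q = (LEAST n. \<exists>g'. minimizer M p k f g' \<and> card (g' ` space M) = n)
        \<longrightarrow> (\<forall>i\<in>{1..q}. emeasure M (C i) > 0))"
proof (intro conjI ballI impI)
  show "thr q b s < 0" "0 < thr q b (Suc s)" by (fact thr_around_zero)+
  show "\<And>i. i \<in> {1..q} \<Longrightarrow> i \<noteq> s \<Longrightarrow> emeasure M (C i) < \<infinity>" by (fact C_finite)
  show "\<And>i. i \<in> {1..q} \<Longrightarrow> i \<noteq> s \<Longrightarrow> emeasure M (C i) > 0 \<Longrightarrow> is_pth_mean M p f (C i) (b i)"
    by (rule b_is_pth_mean)
  show "\<And>i. q = (LEAST n. \<exists>g'. minimizer M p k f g' \<and> card (g' ` space M) = n) \<Longrightarrow>
      i \<in> {1..q} \<Longrightarrow> emeasure M (C i) > 0"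
    by (fact C_pos_if_fewest_values)
qed (fact minimizer_mean_values[OF order_refl q_le_k, unfolded mean_values_def])

end

theorem theorem2p10:
  fixes M :: "'a measure" and p :: real and k :: nat
  assumes "emeasure M (space M) = \<infinity>" and "1 \<le> p" and "1 \<le> k"
  shows "proximinal M p k \<and>
    (\<forall>f q b A. memLp M p f \<longrightarrow> q \<le> k \<longrightarrow> strict_mono_on {1..q} b
       \<longrightarrow> (\<forall>i\<in>{1..q}. A i \<in> sets M \<and> emeasure M (A i) > 0)
       \<longrightarrow> disjoint_family_on A {1..q} \<longrightarrow> (\<Union>i\<in>{1..q}. A i) = space M
       \<longrightarrow> minimizer M p k f (\<lambda>x. \<Sum>i\<in>{1..q}. b i * indicator (A i) x)
       \<longrightarrow> (\<exists>!s. s \<in> {1..q} \<and> b s = 0) \<and>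
           (\<forall>s\<in>{1..q}. b s = 0 \<longrightarrow>
              thr q b s < 0 \<and> 0 < thr q b (Suc s)
            \<and> (\<forall>i\<in>{1..q}. i \<noteq> s \<longrightarrow> emeasure M (Cset M q b f i) < \<infinity>)
            \<and> (\<forall>i\<in>{1..q}. i \<noteq> s \<longrightarrow> emeasure M (Cset M q b f i) > 0
                  \<longrightarrow> is_pth_mean M p f (Cset M q b f i) (b i))
            \<and> minimizer M p q f (\<lambda>x. \<Sum>i\<in>{1..q}.
                  (if i = s then 0 else Mp M p f (Cset M q b f i)) * indicator (Cset M q b f i) x)
            \<and> (q = (LEAST n. \<exists>g'. minimizer M p k f g' \<and> card (g' ` space M) = n)
                  \<longrightarrow> (\<forall>i\<in>{1..q}. emeasure M (Cset M q b f i) > 0))))"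
proof (intro conjI allI impI)
  show "proximinal M p k" using assms by (intro proximinal_Gpk) auto
qed (intro ballI impI Gpk_minimizer.unique_zero_value Gpk_minimizer_zero.minimizer_structure;
     unfold_locales; use assms in simp)+

end
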